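(* Let $m$ be a positive integer and let $Q_1,\dots,Q_m$ be the partition of $\{0,1,\dots,m+1\}^3$ given by $(x,y,z)\in Q_i \iff f(x,y,z)=i$, where $f$ is defined below. Then for every $1\le i<j\le m$, $Q_i$ and $Q_j$ are adjacent (i.e. the partition is internally adjacent).
   Context: Define $f:\{0,\dots,m+1\}^3\to\{1,\dots,m\}$ by: $f(x,y,z)=y$ if $0\le x\le m$, $1\le y\le m$, $z=0$; $f(x,y,z)=x$ if $1\le x\le m$, $0\le y\le m$, $z=m+1$; $f(x,y,z)=y$ if $x=0$, $1\le y\le m$, $1\le z\le m$; $f(x,y,z)=x$ if $1\le x\le m$, $y=0$, $1\le z\le m$; $f(x,y,z)=z$ if $1\le x\le m+1$, $1\le y\le m+1$, $1\le z\le m$; and $f(x,y,z)=1$ for all remaining points. Two disjoint sets $P,Q\subset\mathbb{Z}^3$ are adjacent if there exist $p\in P$, $q\in Q$ and a unit vector $v$ parallel to a coordinate axis with $p+v=q$. *)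

theory Defs
  imports Main
begin

type_synonym pt = "int \<times> int \<times> int"

text \<open>The colouring function f on {0,...,m+1}^3, following the case list of the paper
(the cases are pairwise disjoint; remaining points get colour 1).\<close>
definition fcol :: "int \<Rightarrow> pt \<Rightarrow> int" where
  "fcol m p = (case p of (x, y, z) \<Rightarrow>
     if 0 \<le> x \<and> x \<le> m \<and> 1 \<le> y \<and> y \<le> m \<and> z = 0 then y
     else if 1 \<le> x \<and> x \<le> m \<and> 0 \<le> y \<and> y \<le> m \<and> z = m + 1 then x
     else if x = 0 \<and> 1 \<le> y \<and> y \<le> m \<and> 1 \<le> z \<and> z \<le> m then y
     else if 1 \<le> x \<and> x \<le> m \<and> y = 0 \<and> 1 \<le> z \<and> z \<le> m then x
     else if 1 \<le> x \<and> x \<le> m + 1 \<and> 1 \<le> y \<and> y \<le> m + 1 \<and> 1 \<le> z \<and> z \<le> m then z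
     else 1)"

definition cube :: "int \<Rightarrow> pt set" where
  "cube m = {0..m+1} \<times> {0..m+1} \<times> {0..m+1}"

definition Qpart :: "int \<Rightarrow> int \<Rightarrow> pt set" where
  "Qpart m i = {p \<in> cube m. fcol m p = i}"

definition unit_axis_vecs :: "pt set" where
  "unit_axis_vecs = {(1,0,0), (-1,0,0), (0,1,0), (0,-1,0), (0,0,1), (0,0,-1)}"

definition vadd :: "pt \<Rightarrow> pt \<Rightarrow> pt" where
  "vadd p v = (fst p + fst v, fst (snd p) + fst (snd v), snd (snd p) + snd (snd v))"

definition adjacent :: "pt set \<Rightarrow> pt set \<Rightarrow> bool" where
  "adjacent P Q \<longleftrightarrow> P \<inter> Q = {} \<and>
     (\<exists>p\<in>P. \<exists>q\<in>Q. \<exists>v\<in>unit_axis_vecs. vadd p v = q)"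

end

theory Submission
  imports Defs
begin

text \<open>Inside the cube, away from the faces x = 0, y = 0, z = 0 and z = m + 1, the colour is
  the height z, whereas on the face x = 0 it is y. Hence for i < j the point (1, j, i) of
  colour i is the neighbour of the point (0, j, i) of colour j.\<close>

lemma Qpart_disjoint: "i \<noteq> j \<Longrightarrow> Qpart m i \<inter> Qpart m j = {}"
  by (auto simp: Qpart_def)

lemma adjacentI:
  assumes "P \<inter> Q = {}" and "p \<in> P" and "v \<in> unit_axis_vecs" and "vadd p v \<in> Q"
  shows "adjacent P Q"
  using assms unfolding adjacent_def by blast

lemma interior_point_in_Qpart_height:
  assumes "1 \<le> z" "z \<le> m" "1 \<le> y" "y \<le> m + 1"
  shows "(1, y, z) \<in> Qpart m z"
  using assms by (simp add: Qpart_def cube_def fcol_def)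

lemma face_x0_point_in_Qpart_y:
  assumes "1 \<le> y" "y \<le> m" "1 \<le> z" "z \<le> m"
  shows "(0, y, z) \<in> Qpart m y"
  using assms by (simp add: Qpart_def cube_def fcol_def)

theorem lemma2p1:
  fixes m :: int
  assumes "m \<ge> 1"
  shows "\<forall>i j. 1 \<le> i \<and> i < j \<and> j \<le> m \<longrightarrow> adjacent (Qpart m i) (Qpart m j)"
proof (intro allI impI)
  fix i j :: int
  assume ij: "1 \<le> i \<and> i < j \<and> j \<le> m"
  show "adjacent (Qpart m i) (Qpart m j)"
  proof (rule adjacentI)
    show "Qpart m i \<inter> Qpart m j = {}" using ij by (simp add: Qpart_disjoint)
    show "(1, j, i) \<in> Qpart m i" using ij by (intro interior_point_in_Qpart_height) auto
    show "(-1, 0, 0) \<in> unit_axis_vecs" by (simp add: unit_axis_vecs_def)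
    show "vadd (1, j, i) (-1, 0, 0) \<in> Qpart m j"
      using ij by (simp add: vadd_def face_x0_point_in_Qpart_y)
  qed
qed

end
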